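(* For every $n\in\mathbb{N}_0$ and $m=1,\ldots,n+1$, \begin{align*} \mathbf{X}^{0,\dagger}_n&=r^n\Big[\tfrac{n+1}{2}U^0_n+\tfrac12U^1_n\mathbf{e}_1+\tfrac12V^1_n\mathbf{e}_2\Big],\\ \mathbf{X}^{m,\dagger}_n&=r^n\Big[\tfrac{n+m+1}{2}U^m_n+\tfrac14R^{m,-}_n\mathbf{e}_1+\tfrac14S^{m,+}_n\mathbf{e}_2\Big],\\ \mathbf{Y}^{m,\dagger}_n&=r^n\Big[\tfrac{n+m+1}{2}V^m_n+\tfrac14S^{m,-}_n\mathbf{e}_1-\tfrac14R^{m,+}_n\mathbf{e}_2\Big], \end{align*} where $R^{m,\pm}_n=U^{m+1}_n\pm(n+m+1)(n+m)U^{m-1}_n$ and $S^{m,\pm}_n=V^{m+1}_n\pm(n+m+1)(n+m)V^{m-1}_n$.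
   Context: Quaternions $\mathbb{H}$ have basis $1,\mathbf{e}_1,\mathbf{e}_2,\mathbf{e}_3$ with $\mathbf{e}_i^2=-1$, $\mathbf{e}_1\mathbf{e}_2=\mathbf{e}_3=-\mathbf{e}_2\mathbf{e}_1$, $\mathbf{e}_2\mathbf{e}_3=\mathbf{e}_1=-\mathbf{e}_3\mathbf{e}_2$, $\mathbf{e}_3\mathbf{e}_1=\mathbf{e}_2=-\mathbf{e}_1\mathbf{e}_3$. Reduced quaternions: $\mathcal{A}=\mathrm{span}_\mathbb{R}\{1,\mathbf{e}_1,\mathbf{e}_2\}$; $x=(x_0,x_1,x_2)\in\mathbb{R}^3$ is identified with $x_0+x_1\mathbf{e}_1+x_2\mathbf{e}_2$. $\overline{D}=\partial_{x_0}-\mathbf{e}_1\partial_{x_1}-\mathbf{e}_2\partial_{x_2}$. Spherical coordinates: $x_0=r\cos\theta_1$, $x_1=r\sin\theta_1\cos\theta_2$, $x_2=r\sin\theta_1\sin\theta_2$, $r>0$, $0<\theta_1\le\pi$, $0<\theta_2\le2\pi$. $P_n$ is the Legendre polynomial, $P^m_n(t)=(1-t^2)^{m/2}\frac{d^m}{dt^m}P_n(t)$ the associated Legendre function ($P^0_n=P_n$), with $P^i_n\equiv0$ for $i\ge n+1$. $T_k$, $U_k$ are the Chebyshev polynomials of the first and second kind, with $U_{-1}=0$. Spherical harmonics: $U^l_{n}(\theta_1,\theta_2)=P^l_{n}(\cos\theta_1)T_l(\cos\theta_2)$, $V^m_{n}(\theta_1,\theta_2)=P^m_{n}(\cos\theta_1)\sin\theta_2\,U_{m-1}(\cos\theta_2)$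 (so $V^0_n=0$), and $U^l_n=V^l_n=0$ for $l\ge n+1$. The basis polynomials are $\mathbf{X}^{l,\dagger}_n:=\tfrac12\overline{D}\big(r^{n+1}U^l_{n+1}\big)$, $l=0,\ldots,n+1$, and $\mathbf{Y}^{m,\dagger}_n:=\tfrac12\overline{D}\big(r^{n+1}V^m_{n+1}\big)$, $m=1,\ldots,n+1$. *)

theory Defs
  imports "HOL-Analysis.Analysis" "HOL-Computational_Algebra.Polynomial"
begin

fun legendre :: "nat \<Rightarrow> real poly" where
  "legendre 0 = 1"
| "legendre (Suc 0) = [:0, 1:]"
| "legendre (Suc (Suc k)) =
     smult (1 / real (k + 2))
       (smult (real (2 * k + 3)) ([:0, 1:] * legendre (Suc k)) - smult (real (k + 1)) (legendre k))"

definition assoc_legendre :: "nat \<Rightarrow> nat \<Rightarrow> real \<Rightarrow> real" where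
  "assoc_legendre m n t = sqrt (1 - t\<^sup>2) ^ m * poly ((pderiv ^^ m) (legendre n)) t"

fun chebT :: "nat \<Rightarrow> real poly" where
  "chebT 0 = 1"
| "chebT (Suc 0) = [:0, 1:]"
| "chebT (Suc (Suc k)) = [:0, 2:] * chebT (Suc k) - chebT k"

fun chebU :: "nat \<Rightarrow> real poly" where
  "chebU 0 = 1"
| "chebU (Suc 0) = [:0, 2:]"
| "chebU (Suc (Suc k)) = [:0, 2:] * chebU (Suc k) - chebU k"

(* spherical harmonics U^l_n and V^m_n (V^0_n = 0 since U_{-1} = 0) *)
definition SU :: "nat \<Rightarrow> nat \<Rightarrow> real \<Rightarrow> real \<Rightarrow> real" where
  "SU l n th1 th2 = assoc_legendre l n (cos th1) * poly (chebT l) (cos th2)"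

definition SV :: "nat \<Rightarrow> nat \<Rightarrow> real \<Rightarrow> real \<Rightarrow> real" where
  "SV m n th1 th2 =
     (if m = 0 then 0 else assoc_legendre m n (cos th1) * sin th2 * poly (chebU (m - 1)) (cos th2))"

(* spherical coordinates of a point x = (x0,x1,x2) of R^3:
   r = |x|, theta1 in [0,pi], theta2 in (0,2pi] *)
definition sph_r :: "real \<Rightarrow> real \<Rightarrow> real \<Rightarrow> real" where
  "sph_r x0 x1 x2 = sqrt (x0\<^sup>2 + x1\<^sup>2 + x2\<^sup>2)"

definition sph_theta1 :: "real \<Rightarrow> real \<Rightarrow> real \<Rightarrow> real" where
  "sph_theta1 x0 x1 x2 = arccos (x0 / sph_r x0 x1 x2)"

definition sph_theta2 :: "real \<Rightarrow> real \<Rightarrow> real \<Rightarrow> real" where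
  "sph_theta2 x0 x1 x2 =
     (let rho = sqrt (x1\<^sup>2 + x2\<^sup>2) in
      if x2 > 0 then arccos (x1 / rho) else 2 * pi - arccos (x1 / rho))"

(* Reduced quaternions a0 + a1 e1 + a2 e2 are represented as triples (a0,a1,a2)
   (a real vector space, componentwise).  For a real-valued function f,
   Dbar f = d f/dx0 - e1 d f/dx1 - e2 d f/dx2. *)
definition Dbar :: "(real \<Rightarrow> real \<Rightarrow> real \<Rightarrow> real) \<Rightarrow> real \<Rightarrow> real \<Rightarrow> real \<Rightarrow> real \<times> real \<times> real" where
  "Dbar f x0 x1 x2 =
     (deriv (\<lambda>t. f t x1 x2) x0, - deriv (\<lambda>t. f x0 t x2) x1, - deriv (\<lambda>t. f x0 x1 t) x2)"

definition solidU :: "nat \<Rightarrow> nat \<Rightarrow> real \<Rightarrow> real \<Rightarrow> real \<Rightarrow> real" where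
  "solidU l n x0 x1 x2 =
     sph_r x0 x1 x2 ^ n * SU l n (sph_theta1 x0 x1 x2) (sph_theta2 x0 x1 x2)"

definition solidV :: "nat \<Rightarrow> nat \<Rightarrow> real \<Rightarrow> real \<Rightarrow> real \<Rightarrow> real" where
  "solidV m n x0 x1 x2 =
     sph_r x0 x1 x2 ^ n * SV m n (sph_theta1 x0 x1 x2) (sph_theta2 x0 x1 x2)"

definition Xdag :: "nat \<Rightarrow> nat \<Rightarrow> real \<Rightarrow> real \<Rightarrow> real \<Rightarrow> real \<times> real \<times> real" where
  "Xdag l n x0 x1 x2 = (1/2) *\<^sub>R Dbar (solidU l (n + 1)) x0 x1 x2"

definition Ydag :: "nat \<Rightarrow> nat \<Rightarrow> real \<Rightarrow> real \<Rightarrow> real \<Rightarrow> real \<times> real \<times> real" where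
  "Ydag m n x0 x1 x2 = (1/2) *\<^sub>R Dbar (solidV m (n + 1)) x0 x1 x2"

end

theory Submission
  imports Defs
begin

(* In Cartesian coordinates a solid spherical harmonic factors as
     r^N U^l_N = Re (x1 + i x2)^l * G^l_N,    r^N V^l_N = Im (x1 + i x2)^l * G^l_N,
   where G^l_N = r^(N-l) P_N^{(l)}(x0/r) depends on x1, x2 only through x1^2 + x2^2.
   The x0-derivative of G^l_{N+1} is (N+1+l) G^l_N and its x1- resp. x2-derivative is
   -x1 G^{l+1}_N resp. -x2 G^{l+1}_N; the powers (x1 + i x2)^l are differentiated by the
   chain rule.  Hence Dbar of a solid harmonic is explicit, and the proposition follows by
   rewriting the lower terms with two three-term recurrences: the Chebyshev-type recurrence
   of (x1 + i x2)^l and the relation 2l G^l_{N+1} = (x1^2+x2^2) G^{l+1}_N + (N+1+l)(N+l) G^{l-1}_N. *)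

lemma higher_pderiv_diff:
  "(pderiv ^^ j) (p - q) = (pderiv ^^ j) p - (pderiv ^^ j) (q :: 'a :: idom poly)"
  by (induction j arbitrary: p q) (simp_all del: funpow.simps add: funpow_Suc_right pderiv_diff)

lemma higher_pderiv_X_mult_pderiv:
  "(pderiv ^^ j) ([:0, 1:] * pderiv p) =
     [:0, 1:] * (pderiv ^^ Suc j) p + smult (of_nat j) ((pderiv ^^ j) (p :: 'a :: idom poly))"
proof (induction j)
  case 0
  then show ?case by simp
next
  case (Suc j)
  then show ?case
    by (simp add: pderiv_add pderiv_mult pderiv_pCons pderiv_smult smult_add_left algebra_simps)
qed

lemma higher_pderiv_eq_0:
  assumes "degree p < j" shows "(pderiv ^^ j) (p :: 'a :: idom poly) = 0"
proof (rule poly_eqI)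
  fix i show "coeff ((pderiv ^^ j) p) i = coeff 0 i"
    using assms by (simp add: coeff_higher_pderiv coeff_eq_0)
qed

abbreviation legendre_der :: "nat \<Rightarrow> nat \<Rightarrow> real poly" where
  "legendre_der j k \<equiv> (pderiv ^^ j) (legendre k)"

lemma degree_legendre: "degree (legendre k) \<le> k"
proof (induction k rule: legendre.induct)
  case (3 k)
  have "degree ([:0, 1:] * legendre (Suc k)) \<le> Suc (Suc k)"
    using degree_mult_le[of "[:0, 1:]" "legendre (Suc k)"] 3 by simp
  moreover have "degree (legendre k) \<le> Suc (Suc k)" using 3 by simp
  ultimately show ?case
    by (simp del: mult_pCons_left add: degree_diff_le order_trans[OF degree_smult_le])
qed simp_all

(* Consequently P_k^{(j)} vanishes for j > k; this handles all the boundary cases below. *)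
lemma legendre_der_eq_0: "k < j \<Longrightarrow> legendre_der j k = 0"
  using higher_pderiv_eq_0 degree_legendre le_less_trans by blast

lemma legendre_rec_poly:
  "(real k + 2) * poly (legendre (Suc (Suc k))) t =
     (2 * real k + 3) * t * poly (legendre (Suc k)) t - (real k + 1) * poly (legendre k) t"
  by (simp add: field_simps)

lemma legendre_rec_pderiv:
  "(real k + 2) * poly (pderiv (legendre (Suc (Suc k)))) t =
     (2 * real k + 3) * (poly (legendre (Suc k)) t + t * poly (pderiv (legendre (Suc k))) t)
       - (real k + 1) * poly (pderiv (legendre k)) t"
  by (simp add: pderiv_smult pderiv_diff pderiv_mult pderiv_pCons field_simps)

lemma legendre_pderiv_identities:
  "(\<forall>t. t * poly (pderiv (legendre (Suc k))) t - poly (pderiv (legendre k)) t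
          = (real k + 1) * poly (legendre (Suc k)) t)
   \<and> (\<forall>t. poly (pderiv (legendre (Suc k))) t - t * poly (pderiv (legendre k)) t
          = (real k + 1) * poly (legendre k) t)"
proof (induction k)
  case 0
  then show ?case by (simp add: pderiv_pCons)
next
  case (Suc k)
  show ?case
  proof (intro conjI allI)
    fix t
    define p0 p1 p2 where "p0 = poly (legendre k) t" and "p1 = poly (legendre (Suc k)) t"
      and "p2 = poly (legendre (Suc (Suc k))) t"
    define d0 d1 d2 where "d0 = poly (pderiv (legendre k)) t"
      and "d1 = poly (pderiv (legendre (Suc k))) t" and "d2 = poly (pderiv (legendre (Suc (Suc k)))) t"
    have IH: "t * d1 - d0 = (real k + 1) * p1" "d1 - t * d0 = (real k + 1) * p0"
      using Suc unfolding p0_def p1_def d0_def d1_def by auto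
    have rec: "(real k + 2) * p2 = (2 * real k + 3) * t * p1 - (real k + 1) * p0"
      "(real k + 2) * d2 = (2 * real k + 3) * (p1 + t * d1) - (real k + 1) * d0"
      unfolding p0_def p1_def p2_def d0_def d1_def d2_def
      by (rule legendre_rec_poly legendre_rec_pderiv)+
    have nz: "real k + 2 \<noteq> 0" by simp
    have "(real k + 2) * (d2 - t * d1) = (real k + 2) * ((real k + 2) * p1)"
      using rec IH by algebra
    then have second: "d2 - t * d1 = (real (Suc k) + 1) * p1"
      using nz by simp
    have "(real k + 2) * (t * d2 - d1) = (real k + 2) * ((real k + 2) * p2)"
      using rec IH second by algebra
    then have first: "t * d2 - d1 = (real (Suc k) + 1) * p2"
      using nz by simp
    show "t * poly (pderiv (legendre (Suc (Suc k)))) t - poly (pderiv (legendre (Suc k))) t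
            = (real (Suc k) + 1) * poly (legendre (Suc (Suc k))) t"
      using first unfolding p2_def d1_def d2_def .
    show "poly (pderiv (legendre (Suc (Suc k)))) t - t * poly (pderiv (legendre (Suc k))) t
            = (real (Suc k) + 1) * poly (legendre (Suc k)) t"
      using second unfolding p1_def d1_def d2_def .
  qed
qed

(* The same identities differentiated j times (via the Leibniz rule above). *)
lemma legendre_der_identities:
  "t * poly (legendre_der (Suc j) (Suc k)) t + real j * poly (legendre_der j (Suc k)) t
     - poly (legendre_der (Suc j) k) t = (real k + 1) * poly (legendre_der j (Suc k)) t"
  "poly (legendre_der (Suc j) (Suc k)) t - t * poly (legendre_der (Suc j) k) t
     - real j * poly (legendre_der j k) t = (real k + 1) * poly (legendre_der j k) t"
proof -
  have "poly ([:0, 1:] * pderiv (legendre (Suc k)) - pderiv (legendre k))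
      = poly (smult (real k + 1) (legendre (Suc k)))"
   and "poly (pderiv (legendre (Suc k)) - [:0, 1:] * pderiv (legendre k))
      = poly (smult (real k + 1) (legendre k))"
    using legendre_pderiv_identities[of k] by auto
  then have "[:0, 1:] * pderiv (legendre (Suc k)) - pderiv (legendre k)
      = smult (real k + 1) (legendre (Suc k))"
   and "pderiv (legendre (Suc k)) - [:0, 1:] * pderiv (legendre k)
      = smult (real k + 1) (legendre k)"
    unfolding poly_eq_poly_eq_iff .
  then have "(pderiv ^^ j) ([:0, 1:] * pderiv (legendre (Suc k)) - pderiv (legendre k))
      = (pderiv ^^ j) (smult (real k + 1) (legendre (Suc k)))"
   and "(pderiv ^^ j) (pderiv (legendre (Suc k)) - [:0, 1:] * pderiv (legendre k))
      = (pderiv ^^ j) (smult (real k + 1) (legendre k))"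
    by simp_all
  then show "t * poly (legendre_der (Suc j) (Suc k)) t + real j * poly (legendre_der j (Suc k)) t
     - poly (legendre_der (Suc j) k) t = (real k + 1) * poly (legendre_der j (Suc k)) t"
   and "poly (legendre_der (Suc j) (Suc k)) t - t * poly (legendre_der (Suc j) k) t
     - real j * poly (legendre_der j k) t = (real k + 1) * poly (legendre_der j k) t"
    unfolding higher_pderiv_diff higher_pderiv_X_mult_pderiv higher_pderiv_smult
    by (simp_all del: funpow.simps add: funpow_Suc_right poly_eq_poly_eq_iff[symmetric] fun_eq_iff
        algebra_simps)
qed

(* The combination of both that governs the x0-derivative of the functions G^j_{k+1} below:
   (k+1-j) t P_{k+1}^{(j)} + (1-t^2) P_{k+1}^{(j+1)} = (k+1+j) P_k^{(j)}. *)
lemma legendre_der_mixed: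
  "(real (Suc k) - real j) * t * poly (legendre_der j (Suc k)) t
     + (1 - t\<^sup>2) * poly (legendre_der (Suc j) (Suc k)) t
   = (real (Suc k) + real j) * poly (legendre_der j k) t"
proof -
  define a b c d where "a = poly (legendre_der (Suc j) (Suc k)) t"
    and "b = poly (legendre_der j (Suc k)) t" and "c = poly (legendre_der (Suc j) k) t"
    and "d = poly (legendre_der j k) t"
  have "t * a + real j * b - c = (real k + 1) * b" "a - t * c - real j * d = (real k + 1) * d"
    unfolding a_def b_def c_def d_def by (rule legendre_der_identities)+
  then have "(real (Suc k) - real j) * t * b + (1 - t\<^sup>2) * a = (real (Suc k) + real j) * d"
    by (simp add: algebra_simps power2_eq_square) algebra
  then show ?thesis unfolding a_def b_def d_def .
qed

(* The three-term relation behind  2m G^m_{n+1} = (x1^2+x2^2) G^{m+1}_n + (n+1+m)(n+m) G^{m-1}_n. *)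
lemma legendre_der_three_term:
  assumes "1 \<le> m" "m \<le> Suc n"
  shows "2 * real m * poly (legendre_der m (Suc n)) t - (1 - t\<^sup>2) * poly (legendre_der (Suc m) n) t
       = (real (Suc n) + real m) * (real n + real m) * poly (legendre_der (m - 1) n) t"
proof -
  obtain j where m: "m = Suc j" using assms(1) by (cases m) auto
  have I: "poly (legendre_der (Suc j) (Suc n)) t - t * poly (legendre_der (Suc j) n) t
     - real j * poly (legendre_der j n) t = (real n + 1) * poly (legendre_der j n) t"
    by (rule legendre_der_identities)
  show ?thesis
  proof (cases n)
    case 0
    then have "j = 0" using assms m by simp
    with I show ?thesis unfolding m 0 by (simp add: legendre_der_eq_0)
  next
    case (Suc i)
    define a b c d e where "a = poly (legendre_der (Suc j) (Suc (Suc i))) t"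
      and "b = poly (legendre_der (Suc j) (Suc i)) t" and "c = poly (legendre_der j (Suc i)) t"
      and "d = poly (legendre_der (Suc (Suc j)) (Suc i)) t" and "e = poly (legendre_der (Suc j) i) t"
    have "a - t * b - real j * c = (real i + 2) * c"
      using I unfolding Suc a_def b_def c_def by simp
    moreover have "(real i - real j) * t * b + (1 - t\<^sup>2) * d = (real i + real j + 2) * e"
      using legendre_der_mixed[of i "Suc j" t] unfolding b_def d_def e_def by simp
    moreover have "t * b + real j * c - e = (real i + 1) * c"
      unfolding b_def c_def e_def by (rule legendre_der_identities)
    ultimately have "2 * (real j + 1) * a - (1 - t\<^sup>2) * d = (real i + real j + 3) * (real i + real j + 2) * c"
      by algebra
    then show ?thesis unfolding m Suc a_def c_def d_def by (simp add: algebra_simps)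
  qed
qed

(* Real and imaginary parts of (a + i b)^l: the Cartesian form of r^l sin^l theta1 T_l(cos theta2)
   and of r^l sin^l theta1 sin theta2 U_{l-1}(cos theta2). *)
definition cpow_re :: "nat \<Rightarrow> real \<Rightarrow> real \<Rightarrow> real" where
  "cpow_re l a b = Re (Complex a b ^ l)"

definition cpow_im :: "nat \<Rightarrow> real \<Rightarrow> real \<Rightarrow> real" where
  "cpow_im l a b = Im (Complex a b ^ l)"

lemma cpow_0 [simp]: "cpow_re 0 a b = 1" "cpow_im 0 a b = 0"
  by (simp_all add: cpow_re_def cpow_im_def)

lemma cpow_Suc:
  "cpow_re (Suc l) a b = a * cpow_re l a b - b * cpow_im l a b"
  "cpow_im (Suc l) a b = b * cpow_re l a b + a * cpow_im l a b"
  by (simp_all add: cpow_re_def cpow_im_def algebra_simps)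

lemma cpow_origin: "cpow_re l 0 0 = (if l = 0 then 1 else 0)" "cpow_im l 0 0 = 0"
  by (cases l; simp add: cpow_Suc)+

(* Three-term recurrences: multiplication by (a+ib)^2 = 2a(a+ib) - (a^2+b^2). *)
lemma cpow_rec:
  "cpow_re (Suc (Suc l)) a b = 2 * a * cpow_re (Suc l) a b - (a\<^sup>2 + b\<^sup>2) * cpow_re l a b"
  "cpow_im (Suc (Suc l)) a b = 2 * a * cpow_im (Suc l) a b - (a\<^sup>2 + b\<^sup>2) * cpow_im l a b"
  "cpow_re (Suc (Suc l)) a b - (a\<^sup>2 + b\<^sup>2) * cpow_re l a b = - 2 * b * cpow_im (Suc l) a b"
  "cpow_im (Suc (Suc l)) a b - (a\<^sup>2 + b\<^sup>2) * cpow_im l a b = 2 * b * cpow_re (Suc l) a b"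
  unfolding cpow_Suc by (simp_all add: algebra_simps power2_eq_square)

lemma has_vector_derivative_Complex_pow_re_arg:
  "((\<lambda>s. Complex s b ^ l) has_vector_derivative of_nat l * Complex a b ^ (l - 1)) (at a)"
proof -
  have "((\<lambda>w. (w + \<i> * of_real b) ^ l) has_field_derivative
      of_nat l * (of_real a + \<i> * of_real b) ^ (l - 1) * 1) (at (of_real a))"
    by (auto intro!: derivative_eq_intros)
  from has_vector_derivative_real_field[OF this] show ?thesis
    by (simp add: Complex_eq)
qed

lemma has_vector_derivative_Complex_pow_im_arg:
  "((\<lambda>s. Complex a s ^ l) has_vector_derivative of_nat l * Complex a b ^ (l - 1) * \<i>) (at b)"
proof -
  have "((\<lambda>w. (of_real a + \<i> * w) ^ l) has_field_derivative
      of_nat l * (of_real a + \<i> * of_real b) ^ (l - 1) * \<i>) (at (of_real b))"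
    by (auto intro!: derivative_eq_intros)
  from has_vector_derivative_real_field[OF this] show ?thesis
    by (simp add: Complex_eq)
qed

lemma cpow_derivs:
  "((\<lambda>s. cpow_re l s b) has_real_derivative real l * cpow_re (l - 1) a b) (at a)"
  "((\<lambda>s. cpow_re l a s) has_real_derivative - real l * cpow_im (l - 1) a b) (at b)"
  "((\<lambda>s. cpow_im l s b) has_real_derivative real l * cpow_im (l - 1) a b) (at a)"
  "((\<lambda>s. cpow_im l a s) has_real_derivative real l * cpow_re (l - 1) a b) (at b)"
  unfolding cpow_re_def cpow_im_def
  using has_field_derivative_Re[OF has_vector_derivative_Complex_pow_re_arg]
    has_field_derivative_Re[OF has_vector_derivative_Complex_pow_im_arg]
    has_field_derivative_Im[OF has_vector_derivative_Complex_pow_re_arg]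
    has_field_derivative_Im[OF has_vector_derivative_Complex_pow_im_arg]
  by simp_all

(* For rho = |a + i b| > 0:  rho^l T_l(a/rho) = Re (a+ib)^l  and
   rho^(l+1) (b/rho) U_l(a/rho) = Im (a+ib)^(l+1), since both sides satisfy the same recurrence. *)
lemma chebT_cpow_re:
  assumes rho: "rho = sqrt (a\<^sup>2 + b\<^sup>2)" "rho > 0"
  shows "rho ^ l * poly (chebT l) (a / rho) = cpow_re l a b"
proof (induction l rule: chebT.induct)
  case (3 k)
  have "rho ^ Suc (Suc k) * poly (chebT (Suc (Suc k))) (a / rho)
      = 2 * a * (rho ^ Suc k * poly (chebT (Suc k)) (a / rho)) - rho\<^sup>2 * (rho ^ k * poly (chebT k) (a / rho))"
    using rho(2) by (simp add: field_simps power2_eq_square)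
  then show ?case using 3 rho by (simp add: cpow_rec)
qed (use rho in \<open>simp_all add: cpow_Suc\<close>)

lemma chebU_cpow_im:
  assumes rho: "rho = sqrt (a\<^sup>2 + b\<^sup>2)" "rho > 0"
  shows "rho ^ Suc l * (b / rho) * poly (chebU l) (a / rho) = cpow_im (Suc l) a b"
proof (induction l rule: chebU.induct)
  case (3 k)
  have "rho ^ Suc (Suc (Suc k)) * (b / rho) * poly (chebU (Suc (Suc k))) (a / rho)
      = 2 * a * (rho ^ Suc (Suc k) * (b / rho) * poly (chebU (Suc k)) (a / rho))
        - rho\<^sup>2 * (rho ^ Suc k * (b / rho) * poly (chebU k) (a / rho))"
    using rho(2) by (simp add: field_simps power2_eq_square)
  then show ?case using 3 rho by (simp add: cpow_rec)
qed (use rho(2) in \<open>simp_all add: cpow_Suc field_simps power2_eq_square\<close>)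

lemma sph_r_sym: "sph_r x0 x1 x2 = sph_r x0 x2 x1"
  by (simp add: sph_r_def add_ac)

lemma sph_r_pos:
  assumes "(x0, x1, x2) \<noteq> (0, 0, 0)" shows "sph_r x0 x1 x2 > 0"
proof -
  have "x0\<^sup>2 + x1\<^sup>2 + x2\<^sup>2 \<noteq> 0" using assms by (simp add: add_nonneg_eq_0_iff)
  moreover have "x0\<^sup>2 + x1\<^sup>2 + x2\<^sup>2 \<ge> 0" by simp
  ultimately show ?thesis unfolding sph_r_def by (simp add: order_le_neq_trans)
qed

lemma abs_le_sph_r: "\<bar>x0\<bar> \<le> sph_r x0 x1 x2"
  using real_sqrt_le_mono[of "x0\<^sup>2" "x0\<^sup>2 + x1\<^sup>2 + x2\<^sup>2"] by (simp add: sph_r_def)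

lemma cos_sph_theta1: "sph_r x0 x1 x2 > 0 \<Longrightarrow> cos (sph_theta1 x0 x1 x2) = x0 / sph_r x0 x1 x2"
  using abs_le_sph_r[of x0 x1 x2]
  by (auto simp: sph_theta1_def abs_le_iff divide_le_eq_1 le_divide_eq intro!: cos_arccos)

lemma sin_sph_theta1:
  assumes "sph_r x0 x1 x2 > 0"
  shows "sqrt (1 - (x0 / sph_r x0 x1 x2)\<^sup>2) = sqrt (x1\<^sup>2 + x2\<^sup>2) / sph_r x0 x1 x2"
proof -
  define r where "r = sph_r x0 x1 x2"
  have "x1\<^sup>2 + x2\<^sup>2 = r\<^sup>2 - x0\<^sup>2" unfolding r_def sph_r_def by simp
  then have "1 - (x0 / r)\<^sup>2 = (x1\<^sup>2 + x2\<^sup>2) / r\<^sup>2"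
    using assms unfolding r_def[symmetric] by (simp add: field_simps)
  then show ?thesis using assms unfolding r_def[symmetric] by (simp add: real_sqrt_divide)
qed

lemma cos_sin_sph_theta2:
  assumes rho: "rho = sqrt (x1\<^sup>2 + x2\<^sup>2)" "rho > 0"
  shows "cos (sph_theta2 x0 x1 x2) = x1 / rho" "sin (sph_theta2 x0 x1 x2) = x2 / rho"
proof -
  define c where "c = x1 / rho"
  have "\<bar>x1\<bar> \<le> rho"
    using real_sqrt_le_mono[of "x1\<^sup>2" "x1\<^sup>2 + x2\<^sup>2"] rho(1) by simp
  then have c1: "-1 \<le> c" "c \<le> 1" using rho(2) unfolding c_def by (auto simp: abs_le_iff field_simps)
  have "x2\<^sup>2 = rho\<^sup>2 - x1\<^sup>2" using rho(1) by simp
  then have "1 - c\<^sup>2 = (x2 / rho)\<^sup>2"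
    using rho(2) unfolding c_def by (simp add: field_simps)
  then have sin_c: "sin (arccos c) = \<bar>x2\<bar> / rho"
    using c1 rho(2) by (simp add: sin_arccos real_sqrt_abs)
  have "sph_theta2 x0 x1 x2 = (if x2 > 0 then arccos c else 2 * pi - arccos c)"
    unfolding sph_theta2_def Let_def c_def rho(1) by simp
  then show "cos (sph_theta2 x0 x1 x2) = x1 / rho" "sin (sph_theta2 x0 x1 x2) = x2 / rho"
    using cos_arccos[OF c1] sin_c unfolding c_def by (auto simp: sin_diff cos_diff)
qed

lemma has_real_derivative_sph_r_x0:
  assumes "sph_r x0 x1 x2 > 0"
  shows "((\<lambda>s. sph_r s x1 x2) has_real_derivative x0 / sph_r x0 x1 x2) (at x0)"
  using assms unfolding sph_r_def
  by (auto intro!: derivative_eq_intros simp: field_simps)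

lemma has_real_derivative_sph_r_x1:
  assumes "sph_r x0 x1 x2 > 0"
  shows "((\<lambda>s. sph_r x0 s x2) has_real_derivative x1 / sph_r x0 x1 x2) (at x1)"
  using assms unfolding sph_r_def
  by (auto intro!: derivative_eq_intros simp: field_simps)

lemma has_real_derivative_axial_x0:
  fixes q :: "real poly"
  assumes pos: "sph_r x0 x1 x2 > 0"
  defines "r \<equiv> sph_r x0 x1 x2" and "t \<equiv> x0 / sph_r x0 x1 x2"
  shows "((\<lambda>s. sph_r s x1 x2 ^ e * poly q (s / sph_r s x1 x2)) has_real_derivative
     r ^ e / r * (real e * t * poly q t + (1 - t\<^sup>2) * poly (pderiv q) t)) (at x0)"
proof -
  have "((\<lambda>s. sph_r s x1 x2 ^ e * poly q (s / sph_r s x1 x2)) has_real_derivative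
     real e * r ^ (e - 1) * (x0 / r) * poly q t + r ^ e * (poly (pderiv q) t * ((r - x0 * (x0 / r)) / r\<^sup>2))) (at x0)"
    using pos unfolding r_def t_def
    by (auto intro!: derivative_eq_intros has_real_derivative_sph_r_x0 simp: power2_eq_square)
       (simp add: algebra_simps)
  moreover have "real e * r ^ (e - 1) * (x0 / r) * poly q t + r ^ e * (poly (pderiv q) t * ((r - x0 * (x0 / r)) / r\<^sup>2))
      = r ^ e / r * (real e * t * poly q t + (1 - t\<^sup>2) * poly (pderiv q) t)"
    using pos unfolding t_def r_def[symmetric]
    by (cases e) (simp_all add: field_simps power2_eq_square)
  ultimately show ?thesis by simp
qed

lemma has_real_derivative_axial_x1:
  fixes q :: "real poly"
  assumes pos: "sph_r x0 x1 x2 > 0"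
  defines "r \<equiv> sph_r x0 x1 x2" and "t \<equiv> x0 / sph_r x0 x1 x2"
  shows "((\<lambda>s. sph_r x0 s x2 ^ e * poly q (x0 / sph_r x0 s x2)) has_real_derivative
     x1 * (r ^ e / r\<^sup>2) * (real e * poly q t - t * poly (pderiv q) t)) (at x1)"
proof -
  have "((\<lambda>s. sph_r x0 s x2 ^ e * poly q (x0 / sph_r x0 s x2)) has_real_derivative
     real e * r ^ (e - 1) * (x1 / r) * poly q t - r ^ e * (poly (pderiv q) t * (x0 * (x1 / r) / r\<^sup>2))) (at x1)"
    using pos unfolding r_def t_def
    by (auto intro!: derivative_eq_intros has_real_derivative_sph_r_x1 simp: power2_eq_square)
       (simp add: algebra_simps)
  moreover have "real e * r ^ (e - 1) * (x1 / r) * poly q t - r ^ e * (poly (pderiv q) t * (x0 * (x1 / r) / r\<^sup>2))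
      = x1 * (r ^ e / r\<^sup>2) * (real e * poly q t - t * poly (pderiv q) t)"
    using pos unfolding t_def r_def[symmetric]
    by (cases e) (simp_all add: field_simps power2_eq_square)
  ultimately show ?thesis by simp
qed

definition solid_legendre :: "nat \<Rightarrow> nat \<Rightarrow> real \<Rightarrow> real \<Rightarrow> real \<Rightarrow> real" where
  "solid_legendre j k x0 x1 x2 =
     sph_r x0 x1 x2 ^ (k - j) * poly (legendre_der j k) (x0 / sph_r x0 x1 x2)"

lemma solid_legendre_sym: "solid_legendre j k x0 x1 x2 = solid_legendre j k x0 x2 x1"
  unfolding solid_legendre_def sph_r_sym[of x0 x1] ..

lemma solid_legendre_deriv_x0:
  assumes pos: "sph_r x0 x1 x2 > 0" and j: "j \<le> Suc k"
  shows "((\<lambda>s. solid_legendre j (Suc k) s x1 x2) has_real_derivative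
           (real (Suc k) + real j) * solid_legendre j k x0 x1 x2) (at x0)"
proof -
  define r t where "r = sph_r x0 x1 x2" and "t = x0 / r"
  have "r > 0" using pos by (simp add: r_def)
  have "(r ^ (Suc k - j) / r) * ((real (Suc k) + real j) * poly (legendre_der j k) t)
      = (real (Suc k) + real j) * solid_legendre j k x0 x1 x2"
  proof (cases "j \<le> k")
    case True
    then have "Suc k - j = Suc (k - j)" by simp
    with \<open>r > 0\<close> show ?thesis unfolding solid_legendre_def r_def[symmetric] t_def[symmetric] by simp
  next
    case False
    then show ?thesis by (simp add: solid_legendre_def legendre_der_eq_0)
  qed
  moreover have "real (Suc k - j) * t * poly (legendre_der j (Suc k)) t
      + (1 - t\<^sup>2) * poly (pderiv (legendre_der j (Suc k))) t
      = (real (Suc k) + real j) * poly (legendre_der j k) t"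
    using legendre_der_mixed[of k j t] j by (simp add: of_nat_diff)
  ultimately show ?thesis
    using has_real_derivative_axial_x0[OF pos, of "Suc k - j" "legendre_der j (Suc k)"]
    unfolding solid_legendre_def r_def[symmetric] t_def[symmetric] by simp
qed

lemma solid_legendre_deriv_x1:
  assumes pos: "sph_r x0 x1 x2 > 0" and j: "j \<le> Suc k"
  shows "((\<lambda>s. solid_legendre j (Suc k) x0 s x2) has_real_derivative
           - x1 * solid_legendre (Suc j) k x0 x1 x2) (at x1)"
proof -
  define r t where "r = sph_r x0 x1 x2" and "t = x0 / r"
  have "r > 0" using pos by (simp add: r_def)
  have "x1 * (r ^ (Suc k - j) / r\<^sup>2) * (- poly (legendre_der (Suc j) k) t)
      = - x1 * solid_legendre (Suc j) k x0 x1 x2"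
  proof (cases "Suc j \<le> k")
    case True
    then have "Suc k - j = Suc (Suc (k - Suc j))" by simp
    with \<open>r > 0\<close> show ?thesis
      unfolding solid_legendre_def r_def[symmetric] t_def[symmetric] by (simp add: power2_eq_square)
  next
    case False
    then have "legendre_der (Suc j) k = 0" by (intro legendre_der_eq_0) simp
    then show ?thesis by (simp add: solid_legendre_def)
  qed
  moreover have "real (Suc k - j) * poly (legendre_der j (Suc k)) t
      - t * poly (pderiv (legendre_der j (Suc k))) t = - poly (legendre_der (Suc j) k) t"
    using legendre_der_identities(1)[of t j k] j by (simp add: of_nat_diff algebra_simps)
  ultimately show ?thesis
    using has_real_derivative_axial_x1[OF pos, of "Suc k - j" "legendre_der j (Suc k)"]
    unfolding solid_legendre_def r_def[symmetric] t_def[symmetric] by simp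
qed

lemma solid_legendre_deriv_x2:
  assumes pos: "sph_r x0 x1 x2 > 0" and j: "j \<le> Suc k"
  shows "((\<lambda>s. solid_legendre j (Suc k) x0 x1 s) has_real_derivative
           - x2 * solid_legendre (Suc j) k x0 x1 x2) (at x2)"
  using solid_legendre_deriv_x1[of x0 x2 x1 j k] pos j
  by (simp add: solid_legendre_sym[of _ _ x0 x1] sph_r_sym[of x0 x1])

(* The angular Chebyshev factors in Cartesian form; on the x0-axis both sides degenerate
   consistently, so no hypothesis is needed. *)
lemma chebT_polar:
  "sqrt (x1\<^sup>2 + x2\<^sup>2) ^ l * poly (chebT l) (cos (sph_theta2 x0 x1 x2)) = cpow_re l x1 x2"
proof (cases "x1 = 0 \<and> x2 = 0")
  case True
  then show ?thesis by (cases l) (simp_all add: cpow_origin)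
next
  case False
  define rho where "rho = sqrt (x1\<^sup>2 + x2\<^sup>2)"
  have "rho > 0" using False by (simp add: rho_def add_nonneg_eq_0_iff order_le_neq_trans)
  with chebT_cpow_re[OF rho_def] cos_sin_sph_theta2[OF rho_def] show ?thesis
    unfolding rho_def[symmetric] by simp
qed

lemma chebU_polar:
  "sqrt (x1\<^sup>2 + x2\<^sup>2) ^ Suc l * sin (sph_theta2 x0 x1 x2) * poly (chebU l) (cos (sph_theta2 x0 x1 x2))
     = cpow_im (Suc l) x1 x2"
proof (cases "x1 = 0 \<and> x2 = 0")
  case True
  then show ?thesis by (simp add: cpow_origin)
next
  case False
  define rho where "rho = sqrt (x1\<^sup>2 + x2\<^sup>2)"
  have "rho > 0" using False by (simp add: rho_def add_nonneg_eq_0_iff order_le_neq_trans)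
  with chebU_cpow_im[OF rho_def] cos_sin_sph_theta2[OF rho_def] show ?thesis
    unfolding rho_def[symmetric] by simp
qed

lemma solid_assoc_legendre:
  assumes pos: "sph_r x0 x1 x2 > 0"
  shows "sph_r x0 x1 x2 ^ N * assoc_legendre l N (cos (sph_theta1 x0 x1 x2))
       = sqrt (x1\<^sup>2 + x2\<^sup>2) ^ l * solid_legendre l N x0 x1 x2"
proof (cases "l \<le> N")
  case True
  define r rho where "r = sph_r x0 x1 x2" and "rho = sqrt (x1\<^sup>2 + x2\<^sup>2)"
  have "r ^ N * (rho / r) ^ l = r ^ (N - l) * rho ^ l"
    using True pos by (simp add: r_def power_divide power_diff)
  moreover have "sqrt (1 - (x0 / r)\<^sup>2) = rho / r"
    using sin_sph_theta1[OF pos] by (simp add: r_def rho_def)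
  ultimately show ?thesis
    unfolding assoc_legendre_def solid_legendre_def cos_sph_theta1[OF pos] r_def[symmetric]
    by (simp add: mult_ac rho_def)
next
  case False
  then have "legendre_der l N = 0" by (intro legendre_der_eq_0) simp
  then show ?thesis by (simp add: assoc_legendre_def solid_legendre_def)
qed

(* Factorisation of the solid harmonics, valid everywhere (at the origin both sides vanish
   or equal P_N(0)). *)
lemma solidU_factor:
  "solidU l N x0 x1 x2 = cpow_re l x1 x2 * solid_legendre l N x0 x1 x2"
proof (cases "(x0, x1, x2) = (0, 0, 0)")
  case True
  then show ?thesis
    by (cases "l \<le> N") (auto simp: solidU_def SU_def assoc_legendre_def solid_legendre_def
        cpow_origin sph_r_def sph_theta1_def legendre_der_eq_0 zero_power)
next
  case False
  define th1 th2 where "th1 = sph_theta1 x0 x1 x2" and "th2 = sph_theta2 x0 x1 x2"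
  have "solidU l N x0 x1 x2
      = (sph_r x0 x1 x2 ^ N * assoc_legendre l N (cos th1)) * poly (chebT l) (cos th2)"
    unfolding solidU_def SU_def th1_def th2_def by (simp add: mult_ac)
  also have "\<dots> = solid_legendre l N x0 x1 x2 * (sqrt (x1\<^sup>2 + x2\<^sup>2) ^ l * poly (chebT l) (cos th2))"
    using solid_assoc_legendre[OF sph_r_pos[OF False], of N l] unfolding th1_def
    by (simp add: mult_ac)
  also have "\<dots> = solid_legendre l N x0 x1 x2 * cpow_re l x1 x2"
    using chebT_polar[of x1 x2 l x0] unfolding th2_def by simp
  finally show ?thesis by (simp only: mult.commute)
qed

lemma solidV_factor:
  "solidV m N x0 x1 x2 = cpow_im m x1 x2 * solid_legendre m N x0 x1 x2"
proof (cases "(x0, x1, x2) = (0, 0, 0) \<or> m = 0")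
  case True
  then show ?thesis
    by (cases "m \<le> N") (auto simp: solidV_def SV_def assoc_legendre_def solid_legendre_def
        cpow_origin sph_r_def sph_theta1_def legendre_der_eq_0 zero_power)
next
  case False
  then obtain l where m: "m = Suc l" by (cases m) auto
  define th1 th2 where "th1 = sph_theta1 x0 x1 x2" and "th2 = sph_theta2 x0 x1 x2"
  have "solidV m N x0 x1 x2
      = (sph_r x0 x1 x2 ^ N * assoc_legendre m N (cos th1)) * (sin th2 * poly (chebU l) (cos th2))"
    unfolding solidV_def SV_def th1_def th2_def m by (simp add: mult_ac)
  also have "\<dots> = solid_legendre m N x0 x1 x2 *
      (sqrt (x1\<^sup>2 + x2\<^sup>2) ^ m * sin th2 * poly (chebU l) (cos th2))"
    using False solid_assoc_legendre[OF sph_r_pos, of x0 x1 x2 N m] unfolding th1_def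
    by (simp add: mult_ac)
  also have "\<dots> = solid_legendre m N x0 x1 x2 * cpow_im m x1 x2"
    using chebU_polar[of x1 x2 l x0] unfolding th2_def m by simp
  finally show ?thesis by (simp only: mult.commute)
qed

lemma Dbar_product_solid_legendre:
  assumes pos: "sph_r x0 x1 x2 > 0" and l: "l \<le> Suc n"
    and dh1: "((\<lambda>s. h s x2) has_real_derivative h1) (at x1)"
    and dh2: "((\<lambda>s. h x1 s) has_real_derivative h2) (at x2)"
  shows "Dbar (\<lambda>a b c. h b c * solid_legendre l (Suc n) a b c) x0 x1 x2 =
     ((real (Suc n) + real l) * h x1 x2 * solid_legendre l n x0 x1 x2,
      x1 * h x1 x2 * solid_legendre (Suc l) n x0 x1 x2 - h1 * solid_legendre l (Suc n) x0 x1 x2,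
      x2 * h x1 x2 * solid_legendre (Suc l) n x0 x1 x2 - h2 * solid_legendre l (Suc n) x0 x1 x2)"
proof -
  have "((\<lambda>s. h x1 x2 * solid_legendre l (Suc n) s x1 x2) has_real_derivative
      h x1 x2 * ((real (Suc n) + real l) * solid_legendre l n x0 x1 x2)) (at x0)"
    by (rule DERIV_cmult[OF solid_legendre_deriv_x0[OF pos l]])
  moreover have "((\<lambda>s. h s x2 * solid_legendre l (Suc n) x0 s x2) has_real_derivative
      h1 * solid_legendre l (Suc n) x0 x1 x2 + (- x1 * solid_legendre (Suc l) n x0 x1 x2) * h x1 x2) (at x1)"
    by (rule DERIV_mult[OF dh1 solid_legendre_deriv_x1[OF pos l]])
  moreover have "((\<lambda>s. h x1 s * solid_legendre l (Suc n) x0 x1 s) has_real_derivative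
      h2 * solid_legendre l (Suc n) x0 x1 x2 + (- x2 * solid_legendre (Suc l) n x0 x1 x2) * h x1 x2) (at x2)"
    by (rule DERIV_mult[OF dh2 solid_legendre_deriv_x2[OF pos l]])
  ultimately show ?thesis
    unfolding Dbar_def by (simp add: DERIV_imp_deriv algebra_simps)
qed

lemma Dbar_solidU:
  assumes pos: "sph_r x0 x1 x2 > 0" and l: "l \<le> Suc n"
  shows "Dbar (solidU l (Suc n)) x0 x1 x2 =
     ((real (Suc n) + real l) * cpow_re l x1 x2 * solid_legendre l n x0 x1 x2,
      x1 * cpow_re l x1 x2 * solid_legendre (Suc l) n x0 x1 x2
        - real l * cpow_re (l - 1) x1 x2 * solid_legendre l (Suc n) x0 x1 x2,
      x2 * cpow_re l x1 x2 * solid_legendre (Suc l) n x0 x1 x2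
        + real l * cpow_im (l - 1) x1 x2 * solid_legendre l (Suc n) x0 x1 x2)"
proof -
  have "solidU l (Suc n) = (\<lambda>a b c. cpow_re l b c * solid_legendre l (Suc n) a b c)"
    by (intro ext) (rule solidU_factor)
  then show ?thesis
    using Dbar_product_solid_legendre[OF pos l cpow_derivs(1,2)] by simp
qed

lemma Dbar_solidV:
  assumes pos: "sph_r x0 x1 x2 > 0" and l: "l \<le> Suc n"
  shows "Dbar (solidV l (Suc n)) x0 x1 x2 =
     ((real (Suc n) + real l) * cpow_im l x1 x2 * solid_legendre l n x0 x1 x2,
      x1 * cpow_im l x1 x2 * solid_legendre (Suc l) n x0 x1 x2
        - real l * cpow_im (l - 1) x1 x2 * solid_legendre l (Suc n) x0 x1 x2,
      x2 * cpow_im l x1 x2 * solid_legendre (Suc l) n x0 x1 x2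
        - real l * cpow_re (l - 1) x1 x2 * solid_legendre l (Suc n) x0 x1 x2)"
proof -
  have "solidV l (Suc n) = (\<lambda>a b c. cpow_im l b c * solid_legendre l (Suc n) a b c)"
    by (intro ext) (rule solidV_factor)
  then show ?thesis
    using Dbar_product_solid_legendre[OF pos l cpow_derivs(3,4)] by simp
qed

lemma solid_legendre_three_term:
  assumes pos: "sph_r x0 x1 x2 > 0" and m: "1 \<le> m" "m \<le> Suc n"
  shows "2 * real m * solid_legendre m (Suc n) x0 x1 x2
     = (x1\<^sup>2 + x2\<^sup>2) * solid_legendre (Suc m) n x0 x1 x2
       + (real (Suc n) + real m) * (real n + real m) * solid_legendre (m - 1) n x0 x1 x2"
proof -
  define r t where "r = sph_r x0 x1 x2" and "t = x0 / r"
  have rho2: "x1\<^sup>2 + x2\<^sup>2 = r\<^sup>2 * (1 - t\<^sup>2)"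
    using pos unfolding t_def r_def by (simp add: sph_r_def field_simps)
  have high: "(x1\<^sup>2 + x2\<^sup>2) * solid_legendre (Suc m) n x0 x1 x2
      = r ^ (Suc n - m) * ((1 - t\<^sup>2) * poly (legendre_der (Suc m) n) t)"
  proof (cases "Suc m \<le> n")
    case True
    then have "Suc n - m = Suc (Suc (n - Suc m))" by simp
    then show ?thesis
      unfolding rho2 solid_legendre_def r_def[symmetric] t_def[symmetric] by (simp add: power2_eq_square)
  next
    case False
    then have "legendre_der (Suc m) n = 0" by (intro legendre_der_eq_0) simp
    then show ?thesis unfolding solid_legendre_def by simp
  qed
  have low: "solid_legendre (m - 1) n x0 x1 x2 = r ^ (Suc n - m) * poly (legendre_der (m - 1) n) t"
    using m unfolding solid_legendre_def r_def[symmetric] t_def[symmetric] by (simp add: Suc_diff_le)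
  have "2 * real m * solid_legendre m (Suc n) x0 x1 x2 - (x1\<^sup>2 + x2\<^sup>2) * solid_legendre (Suc m) n x0 x1 x2
      = r ^ (Suc n - m) * (2 * real m * poly (legendre_der m (Suc n)) t
                           - (1 - t\<^sup>2) * poly (legendre_der (Suc m) n) t)"
    unfolding high by (simp add: solid_legendre_def r_def[symmetric] t_def[symmetric] algebra_simps)
  also have "\<dots> = (real (Suc n) + real m) * (real n + real m) * solid_legendre (m - 1) n x0 x1 x2"
    unfolding legendre_der_three_term[OF m] low by (simp add: algebra_simps)
  finally show ?thesis by simp
qed

lemma Xdag_0_solid:
  assumes nz: "(x0, x1, x2) \<noteq> (0, 0, 0)"
  shows "Xdag 0 n x0 x1 x2 =
     ((real n + 1) / 2 * solidU 0 n x0 x1 x2, 1/2 * solidU 1 n x0 x1 x2, 1/2 * solidV 1 n x0 x1 x2)"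
  using Dbar_solidU[OF sph_r_pos[OF nz], of 0 n]
  by (simp add: Xdag_def solidU_factor solidV_factor cpow_Suc algebra_simps)

lemma Xdag_solid:
  assumes nz: "(x0, x1, x2) \<noteq> (0, 0, 0)" and m: "1 \<le> m" "m \<le> Suc n"
  defines "K \<equiv> (real n + real m + 1) * (real n + real m)"
  shows "Xdag m n x0 x1 x2 =
     ((real n + real m + 1) / 2 * solidU m n x0 x1 x2,
      1/4 * (solidU (m + 1) n x0 x1 x2 - K * solidU (m - 1) n x0 x1 x2),
      1/4 * (solidV (m + 1) n x0 x1 x2 + K * solidV (m - 1) n x0 x1 x2))"
proof -
  obtain j where j: "m = Suc j" using m(1) by (cases m) auto
  define rho2 gN g gp gm where "rho2 = x1\<^sup>2 + x2\<^sup>2" and "gN = solid_legendre m (Suc n) x0 x1 x2"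
    and "g = solid_legendre m n x0 x1 x2"
    and "gp = solid_legendre (Suc m) n x0 x1 x2" and "gm = solid_legendre j n x0 x1 x2"
  define c0 c1 c2 d0 d2 where "c0 = cpow_re j x1 x2" and "c1 = cpow_re m x1 x2"
    and "c2 = cpow_re (Suc m) x1 x2" and "d0 = cpow_im j x1 x2" and "d2 = cpow_im (Suc m) x1 x2"
  have three_term: "2 * real m * gN = rho2 * gp + K * gm"
    using solid_legendre_three_term[OF sph_r_pos[OF nz] m]
    unfolding gN_def gp_def gm_def rho2_def K_def j by (simp add: algebra_simps)
  have rec: "c2 = 2 * x1 * c1 - rho2 * c0" "d2 - rho2 * d0 = 2 * x2 * c1"
    unfolding c0_def c1_def c2_def d0_def d2_def rho2_def j by (rule cpow_rec(1), rule cpow_rec(4))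
  have "Xdag m n x0 x1 x2 = (1/2) *\<^sub>R
      ((real (Suc n) + real m) * c1 * g, x1 * c1 * gp - real m * c0 * gN, x2 * c1 * gp + real m * d0 * gN)"
    using Dbar_solidU[OF sph_r_pos[OF nz] m(2)]
    unfolding Xdag_def c0_def c1_def d0_def g_def gN_def gp_def j by simp
  moreover have "1/2 * (x1 * c1 * gp - real m * c0 * gN) = 1/4 * (c2 * gp - K * (c0 * gm))"
    using three_term rec by algebra
  moreover have "1/2 * (x2 * c1 * gp + real m * d0 * gN) = 1/4 * (d2 * gp + K * (d0 * gm))"
    using three_term rec by algebra
  ultimately show ?thesis
    unfolding solidU_factor solidV_factor c0_def c1_def c2_def d0_def d2_def g_def gp_def gm_def j
    by (simp add: algebra_simps)
qed

lemma Ydag_solid: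
  assumes nz: "(x0, x1, x2) \<noteq> (0, 0, 0)" and m: "1 \<le> m" "m \<le> Suc n"
  defines "K \<equiv> (real n + real m + 1) * (real n + real m)"
  shows "Ydag m n x0 x1 x2 =
     ((real n + real m + 1) / 2 * solidV m n x0 x1 x2,
      1/4 * (solidV (m + 1) n x0 x1 x2 - K * solidV (m - 1) n x0 x1 x2),
      - (1/4 * (solidU (m + 1) n x0 x1 x2 + K * solidU (m - 1) n x0 x1 x2)))"
proof -
  obtain j where j: "m = Suc j" using m(1) by (cases m) auto
  define rho2 gN g gp gm where "rho2 = x1\<^sup>2 + x2\<^sup>2" and "gN = solid_legendre m (Suc n) x0 x1 x2"
    and "g = solid_legendre m n x0 x1 x2"
    and "gp = solid_legendre (Suc m) n x0 x1 x2" and "gm = solid_legendre j n x0 x1 x2"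
  define c0 c2 d0 d1 d2 where "c0 = cpow_re j x1 x2" and "c2 = cpow_re (Suc m) x1 x2"
    and "d0 = cpow_im j x1 x2" and "d1 = cpow_im m x1 x2" and "d2 = cpow_im (Suc m) x1 x2"
  have three_term: "2 * real m * gN = rho2 * gp + K * gm"
    using solid_legendre_three_term[OF sph_r_pos[OF nz] m]
    unfolding gN_def gp_def gm_def rho2_def K_def j by (simp add: algebra_simps)
  have rec: "d2 = 2 * x1 * d1 - rho2 * d0" "c2 - rho2 * c0 = - 2 * x2 * d1"
    unfolding c0_def c2_def d0_def d1_def d2_def rho2_def j by (rule cpow_rec(2), rule cpow_rec(3))
  have "Ydag m n x0 x1 x2 = (1/2) *\<^sub>R
      ((real (Suc n) + real m) * d1 * g, x1 * d1 * gp - real m * d0 * gN, x2 * d1 * gp - real m * c0 * gN)"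
    using Dbar_solidV[OF sph_r_pos[OF nz] m(2)]
    unfolding Ydag_def c0_def d0_def d1_def g_def gN_def gp_def j by simp
  moreover have "1/2 * (x1 * d1 * gp - real m * d0 * gN) = 1/4 * (d2 * gp - K * (d0 * gm))"
    using three_term rec by algebra
  moreover have "1/2 * (x2 * d1 * gp - real m * c0 * gN) = - (1/4 * (c2 * gp + K * (c0 * gm)))"
    using three_term rec by algebra
  ultimately show ?thesis
    unfolding solidU_factor solidV_factor c0_def c2_def d0_def d1_def d2_def g_def gp_def gm_def j
    by (simp add: algebra_simps)
qed

theorem proposition1:
  fixes n :: nat and x0 x1 x2 :: real
  assumes "(x0, x1, x2) \<noteq> (0, 0, 0)"
  defines "r \<equiv> sph_r x0 x1 x2"
      and "th1 \<equiv> sph_theta1 x0 x1 x2"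
      and "th2 \<equiv> sph_theta2 x0 x1 x2"
  shows "Xdag 0 n x0 x1 x2 =
           r ^ n *\<^sub>R ((real n + 1) / 2 * SU 0 n th1 th2,
                          1/2 * SU 1 n th1 th2,
                          1/2 * SV 1 n th1 th2)
       \<and> (\<forall>m \<in> {1..n+1}.
            Xdag m n x0 x1 x2 =
              r ^ n *\<^sub>R ((real n + real m + 1) / 2 * SU m n th1 th2,
                 1/4 * (SU (m+1) n th1 th2 - (real n + real m + 1) * (real n + real m) * SU (m-1) n th1 th2),
                 1/4 * (SV (m+1) n th1 th2 + (real n + real m + 1) * (real n + real m) * SV (m-1) n th1 th2))
          \<and> Ydag m n x0 x1 x2 =
              r ^ n *\<^sub>R ((real n + real m + 1) / 2 * SV m n th1 th2,
                 1/4 * (SV (m+1) n th1 th2 - (real n + real m + 1) * (real n + real m) * SV (m-1) n th1 th2),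
                 - (1/4 * (SU (m+1) n th1 th2 + (real n + real m + 1) * (real n + real m) * SU (m-1) n th1 th2))))"
proof -
  have U: "solidU l n x0 x1 x2 = r ^ n * SU l n th1 th2"
   and V: "solidV l n x0 x1 x2 = r ^ n * SV l n th1 th2" for l
    unfolding solidU_def solidV_def r_def th1_def th2_def by simp_all
  show ?thesis
    using Xdag_0_solid[OF assms(1), of n] Xdag_solid[OF assms(1), of _ n] Ydag_solid[OF assms(1), of _ n]
    by (simp add: U V algebra_simps)
qed

end
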